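(* For every integer $n\ge 1$, the square of the path, $P_n^2$, is odd prime.
   Context: All graphs are finite and simple. A graph $G$ of order $N$ is odd prime if there is a bijection $\ell:V(G)\to\{1,3,\ldots,2N-1\}$ with $\gcd(\ell(u),\ell(v))=1$ for every edge $uv$. For a graph $G$ and $k\ge 1$, the power $G^k$ has vertex set $V(G)$, with $u\ne v$ adjacent iff their distance in $G$ is at most $k$. $P_n$ is the path on $n$ vertices. *)

theory Defs
  imports Main
begin

definition simple_graph :: "'a set \<Rightarrow> ('a \<Rightarrow> 'a \<Rightarrow> bool) \<Rightarrow> bool" where
  "simple_graph V E \<longleftrightarrow> finite V \<and> (\<forall>u v. E u v \<longrightarrow> u \<in> V \<and> v \<in> V)
     \<and> (\<forall>u v. E u v \<longrightarrow> E v u) \<and> (\<forall>v. \<not> E v v)"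

definition walk_of_length :: "('a \<Rightarrow> 'a \<Rightarrow> bool) \<Rightarrow> nat \<Rightarrow> 'a \<Rightarrow> 'a \<Rightarrow> bool" where
  "walk_of_length E k u v \<longleftrightarrow> (\<exists>xs. length xs = Suc k \<and> hd xs = u \<and> last xs = v
     \<and> (\<forall>i<k. E (xs ! i) (xs ! Suc i)))"

definition dist_le :: "('a \<Rightarrow> 'a \<Rightarrow> bool) \<Rightarrow> nat \<Rightarrow> 'a \<Rightarrow> 'a \<Rightarrow> bool" where
  "dist_le E k u v \<longleftrightarrow> (\<exists>j\<le>k. walk_of_length E j u v)"

definition graph_power :: "'a set \<Rightarrow> ('a \<Rightarrow> 'a \<Rightarrow> bool) \<Rightarrow> nat \<Rightarrow> 'a \<Rightarrow> 'a \<Rightarrow> bool" where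
  "graph_power V E k u v \<longleftrightarrow> u \<in> V \<and> v \<in> V \<and> u \<noteq> v \<and> dist_le E k u v"

definition path_vertices :: "nat \<Rightarrow> nat set" where
  "path_vertices n = {1..n}"

definition path_edge :: "nat \<Rightarrow> nat \<Rightarrow> nat \<Rightarrow> bool" where
  "path_edge n i j \<longleftrightarrow> i \<in> {1..n} \<and> j \<in> {1..n} \<and> (i = Suc j \<or> j = Suc i)"

definition odd_prime :: "'a set \<Rightarrow> ('a \<Rightarrow> 'a \<Rightarrow> bool) \<Rightarrow> bool" where
  "odd_prime V E \<longleftrightarrow> (\<exists>l :: 'a \<Rightarrow> nat.
     bij_betw l V {m. odd m \<and> m \<le> 2 * card V - 1}
     \<and> (\<forall>u v. E u v \<longrightarrow> coprime (l u) (l v)))"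

end

theory Submission
  imports Defs
begin

(* Label vertex i of P_n by 2i - 1.  Vertices adjacent in P_n^2 lie at distance 1 or 2 in P_n,
   so their labels are distinct odd numbers differing by 2 or 4; a common divisor would divide
   this power of 2 and hence be 1. *)

lemma path_walk_endpoints_close:
  assumes "walk_of_length (path_edge n) k u v"
  shows "v \<le> u + k \<and> u \<le> v + k"
proof -
  obtain xs where xs: "length xs = Suc k" "hd xs = u" "last xs = v"
    and steps: "\<forall>i<k. path_edge n (xs ! i) (xs ! Suc i)"
    using assms unfolding walk_of_length_def by blast
  have "xs ! i \<le> xs ! 0 + i \<and> xs ! 0 \<le> xs ! i + i" if "i \<le> k" for i
    using that
  proof (induction i)
    case (Suc i)
    then have "path_edge n (xs ! i) (xs ! Suc i)" using steps by simp
    with Suc show ?case by (auto simp: path_edge_def)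
  qed simp
  moreover have "xs \<noteq> []" using xs(1) by auto
  then have "hd xs = xs ! 0" "last xs = xs ! k"
    using xs(1) by (auto simp: hd_conv_nth last_conv_nth)
  ultimately show ?thesis using xs by auto
qed

lemma path_power_edgeD:
  assumes "graph_power (path_vertices n) (path_edge n) k u v"
  shows "1 \<le> u" "1 \<le> v" "u \<noteq> v" "v \<le> u + k" "u \<le> v + k"
proof -
  from assms obtain j where "j \<le> k" "walk_of_length (path_edge n) j u v"
    unfolding graph_power_def dist_le_def by blast
  then show "v \<le> u + k" "u \<le> v + k"
    using path_walk_endpoints_close by fastforce+
  show "1 \<le> u" "1 \<le> v" "u \<noteq> v"
    using assms by (auto simp: graph_power_def path_vertices_def)
qed

lemma coprime_odd_add_power2:
  fixes a :: nat
  assumes "odd a"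
  shows "coprime a (a + 2 ^ k)"
proof -
  have "coprime a (2 ^ k)" using assms by simp
  moreover have "gcd a (a + 2 ^ k) = gcd a (2 ^ k)" by (rule gcd_add2)
  ultimately show ?thesis by (simp only: coprime_iff_gcd_eq_1)
qed

lemma coprime_close_odd:
  fixes a b :: nat
  assumes "odd a" "odd b" "a \<noteq> b" "b \<le> a + 4" "a \<le> b + 4"
  shows "coprime a b"
proof -
  have close: "coprime x y" if "odd x" "odd y" "x < y" "y \<le> x + 4" for x y :: nat
  proof -
    from that have "y = x + 2 ^ 1 \<or> y = x + 2 ^ 2" by (auto elim!: oddE) presburger
    then show ?thesis using coprime_odd_add_power2[OF \<open>odd x\<close>] by blast
  qed
  consider "a < b" | "b < a" using \<open>a \<noteq> b\<close> by linarith
  then show ?thesis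
  proof cases
    case 1
    with assms show ?thesis by (intro close) auto
  next
    case 2
    with assms show ?thesis by (subst coprime_commute) (intro close; auto)
  qed
qed

lemma bij_betw_odd_labels:
  "bij_betw (\<lambda>i. 2 * i - 1) {1..n} {m. odd m \<and> m \<le> 2 * card {1..n} - 1}"
  by (rule bij_betw_byWitness[where f' = "\<lambda>m. (m + 1) div 2"]) (auto elim!: oddE)

theorem theorem5p1:
  fixes n :: nat
  assumes "n \<ge> 1"
  shows "odd_prime (path_vertices n) (graph_power (path_vertices n) (path_edge n) 2)"
  unfolding odd_prime_def
proof (intro exI[of _ "\<lambda>i. 2 * i - 1"] conjI allI impI)
  show "bij_betw (\<lambda>i. 2 * i - 1) (path_vertices n)
      {m. odd m \<and> m \<le> 2 * card (path_vertices n) - 1}"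
    unfolding path_vertices_def by (rule bij_betw_odd_labels)
next
  fix u v
  assume "graph_power (path_vertices n) (path_edge n) 2 u v"
  note uv = path_power_edgeD[OF this]
  show "coprime (2 * u - 1) (2 * v - 1)"
    by (rule coprime_close_odd) (use uv in auto)
qed

end
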